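(* Let the spot price $\pi$ have CDF $F_{\pi}$ and monotonically decreasing density $f_{\pi}$ on $[\underline{\pi},\bar{\pi}]$ with $0\le\underline{\pi}<\bar{\pi}$, and let $t_k,t_e,t_s,t_r>0$ with $\frac{t_e}{2}<t_s<t_e$. Consider the problem (P3): minimize over $(q,p)$ $$\Phi_3(p,q)=q\,t_e\bar{\pi}+\frac{(1-q)t_e}{1-\frac{t_r}{t_k}(1-F_{\pi}(p))}\cdot\frac{\int_{\underline{\pi}}^{p}x f_{\pi}(x)\,dx}{F_{\pi}(p)}$$ subject to $q t_e\le t_s$, $\;\underline{\pi}\le p\le\bar{\pi}$, $\;0\le q\le 1$, $$\frac{(1-q)t_e}{1-\frac{t_r}{t_k}(1-F_{\pi}(p))}\cdot\frac{1}{F_{\pi}(p)}\le t_s,\qquad t_r<\frac{t_k}{2(1-F_{\pi}(p))}.$$ If $(q^*,p^* )$ is an optimal solution of (P3), then $F_{\pi}(p^* )\ge\frac12$.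
   Context: Model (persistent request): a user runs a fraction $q$ of a job (execution time $t_e$, deadline $t_s$) on an on-demand instance at price $\bar{\pi}$ and the rest on a spot instance with bid $p$, where an interrupted job resumes when the bid again exceeds the spot price, incurring a recovery time $t_r$ per resumption; spot prices in slots of length $t_k$ are i.i.d. with CDF $F_{\pi}$ and monotonically decreasing density $f_{\pi}$ on $[\underline{\pi},\bar{\pi}]$. *)

theory Defs
  imports "HOL-Analysis.Analysis"
begin

text \<open>Objective of problem (P3). Parameters: CDF F, density f, lower price bound lo,
  on-demand price hi, slot length tk, execution time te, recovery time tr.\<close>
definition Phi3 :: "(real \<Rightarrow> real) \<Rightarrow> (real \<Rightarrow> real) \<Rightarrow> real \<Rightarrow> real \<Rightarrow> real \<Rightarrow> real \<Rightarrow> real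
                    \<Rightarrow> real \<Rightarrow> real \<Rightarrow> real" where
  "Phi3 F f lo hi tk te tr p q =
     q * te * hi
     + ((1 - q) * te / (1 - (tr / tk) * (1 - F p)))
       * (integral {lo..p} (\<lambda>x. x * f x) / F p)"

text \<open>The condition F p > 0 is the implicit domain condition
  (the objective and the deadline constraint divide by F p). The constraint
  t_r < t_k / (2 (1 - F p)) is written in the equivalent form 2 t_r (1 - F p) < t_k,
  which reads it as vacuous (right-hand side = +infinity) when F p = 1.\<close>
definition feasible_P3 :: "(real \<Rightarrow> real) \<Rightarrow> real \<Rightarrow> real \<Rightarrow> real \<Rightarrow> real \<Rightarrow> real \<Rightarrow> real
                          \<Rightarrow> real \<Rightarrow> real \<Rightarrow> bool" where
  "feasible_P3 F lo hi tk te ts tr q p \<longleftrightarrow>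
     q * te \<le> ts \<and> lo \<le> p \<and> p \<le> hi \<and> 0 \<le> q \<and> q \<le> 1 \<and> F p > 0 \<and>
     ((1 - q) * te / (1 - (tr / tk) * (1 - F p))) * (1 / F p) \<le> ts \<and>
     2 * tr * (1 - F p) < tk"

definition optimal_P3 :: "(real \<Rightarrow> real) \<Rightarrow> (real \<Rightarrow> real) \<Rightarrow> real \<Rightarrow> real \<Rightarrow> real \<Rightarrow> real \<Rightarrow> real
                          \<Rightarrow> real \<Rightarrow> real \<Rightarrow> real \<Rightarrow> bool" where
  "optimal_P3 F f lo hi tk te ts tr q p \<longleftrightarrow>
     feasible_P3 F lo hi tk te ts tr q p \<and>
     (\<forall>q' p'. feasible_P3 F lo hi tk te ts tr q' p' \<longrightarrow>
        Phi3 F f lo hi tk te tr p q \<le> Phi3 F f lo hi tk te tr p' q')"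

end

theory Submission
  imports Defs
begin

text \<open>Bidding the maximal price hi and running the fraction 1 - t_s/t_e on demand beats every
  feasible pair (q, p) with F(p) < 1. Writing s for the spot running time, the cost difference
  splits into a part that is nonnegative because s \<le> t_s and the mean price is at most hi, and a
  part that is positive because the recovery overhead factor 1 - (t_r/t_k)(1 - F(p)) is below 1.
  Hence in fact F(p*) = 1.\<close>

lemma moment_integrable_on_interval:
  fixes f :: "real \<Rightarrow> real"
  assumes "\<And>x. x \<in> {a..b} \<Longrightarrow> 0 \<le> f x" and "f integrable_on {a..b}"
  shows "(\<lambda>x. x * f x) integrable_on {a..b}"
proof -
  have "f absolutely_integrable_on {a..b}"
    using nonnegative_absolutely_integrable_1 assms by blast
  moreover have "(\<lambda>x. x) \<in> borel_measurable (lebesgue_on {a..b})"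
    by (intro continuous_imp_measurable_on_sets_lebesgue continuous_on_id) auto
  ultimately have "(\<lambda>x. x * f x) absolutely_integrable_on {a..b}"
    by (intro absolutely_integrable_bounded_measurable_product_real) auto
  then show ?thesis using set_lebesgue_integral_eq_integral(1) by blast
qed

lemma moment_le_right_endpoint:
  fixes f :: "real \<Rightarrow> real"
  assumes "\<And>x. x \<in> {a..b} \<Longrightarrow> 0 \<le> f x" and "f integrable_on {a..b}"
  shows "integral {a..b} (\<lambda>x. x * f x) \<le> b * integral {a..b} f"
proof -
  have "integral {a..b} (\<lambda>x. x * f x) \<le> integral {a..b} (\<lambda>x. b * f x)"
    using moment_integrable_on_interval[OF assms] integrable_cmul[OF assms(2), of b] assms(1)
    by (intro integral_le) (auto intro!: mult_right_mono)
  then show ?thesis by simp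
qed

lemma integral_split_density:
  fixes f :: "real \<Rightarrow> real"
  assumes "f integrable_on {lo..hi}" and "integral {lo..hi} f = 1" and "p \<in> {lo..hi}"
  shows "integral {p..hi} f = 1 - integral {lo..p} f"
  using Henstock_Kurzweil_Integration.integral_combine[OF _ _ assms(1), of p] assms(2,3) by auto

lemma mixed_cost_exceeds_on_demand_max_bid:
  fixes q te ts s D Fp hi I J :: real
  assumes spot_time: "(1 - q) * te = s * D * Fp"
    and "0 < s" and "s \<le> ts" and "D < 1" and "0 < Fp" and "0 < hi"
    and tail: "J \<le> hi * (1 - Fp)" and mean: "I + J \<le> hi"
  shows "(te - ts) * hi + ts * (I + J) < q * te * hi + s * I"
proof -
  have on_demand_time: "q * te = te - s * D * Fp"
    using spot_time by (simp add: algebra_simps)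
  have split: "q * te * hi + s * I - ((te - ts) * hi + ts * (I + J))
      = (ts - s) * (hi - (I + J)) + s * (hi * (1 - D * Fp) - J)"
    unfolding on_demand_time by (simp add: algebra_simps)
  have "(ts - s) * (hi - (I + J)) \<ge> 0"
    using \<open>s \<le> ts\<close> mean by simp
  moreover have "hi * (1 - D * Fp) - J \<ge> hi * Fp * (1 - D)"
    using tail by (simp add: algebra_simps)
  moreover have "hi * Fp * (1 - D) > 0"
    using \<open>0 < hi\<close> \<open>0 < Fp\<close> \<open>D < 1\<close> by simp
  ultimately have "s * (hi * (1 - D * Fp) - J) > 0"
    using \<open>0 < s\<close> by (meson less_le_trans mult_pos_pos)
  with split \<open>(ts - s) * _ \<ge> 0\<close> show ?thesis by linarith
qed

lemma feasible_P3_on_demand_max_bid: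
  assumes "F hi = 1" and "lo < hi" and "0 < tk" and "0 < te" and "0 < ts"
    and "te / 2 < ts" and "ts < te"
  shows "feasible_P3 F lo hi tk te ts tr (1 - ts / te) hi"
  unfolding feasible_P3_def using assms by (simp add: field_simps)

lemma Phi3_max_bid:
  assumes "F hi = 1" and "0 < te"
  shows "Phi3 F f lo hi tk te tr hi (1 - ts / te)
    = (te - ts) * hi + ts * integral {lo..hi} (\<lambda>x. x * f x)"
  unfolding Phi3_def using assms by (simp add: algebra_simps)

lemma Phi3_on_demand_max_bid_less:
  fixes F f :: "real \<Rightarrow> real" and lo hi tk te ts tr q p :: real
  assumes "0 \<le> lo" and "lo < hi"
    and f_nonneg: "\<And>x. x \<in> {lo..hi} \<Longrightarrow> 0 \<le> f x"
    and f_int: "f integrable_on {lo..hi}"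
    and f_total: "integral {lo..hi} f = 1"
    and F_def: "\<And>x. x \<in> {lo..hi} \<Longrightarrow> F x = integral {lo..x} f"
    and "0 < tk" and "0 < te" and "0 < tr" and "ts < te"
    and "feasible_P3 F lo hi tk te ts tr q p" and "F p < 1"
  shows "Phi3 F f lo hi tk te tr hi (1 - ts / te) < Phi3 F f lo hi tk te tr p q"
proof -
  have p: "p \<in> {lo..hi}" and "q * te \<le> ts" and "0 < F p"
    and deadline: "((1 - q) * te / (1 - (tr / tk) * (1 - F p))) * (1 / F p) \<le> ts"
    and recovery: "2 * tr * (1 - F p) < tk"
    using \<open>feasible_P3 F lo hi tk te ts tr q p\<close> unfolding feasible_P3_def by auto
  define D where "D = 1 - (tr / tk) * (1 - F p)"
  define s where "s = (1 - q) * te / (D * F p)"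
  define I where "I = integral {lo..p} (\<lambda>x. x * f x)"
  define J where "J = integral {p..hi} (\<lambda>x. x * f x)"
  have "D < 1"
    unfolding D_def using \<open>F p < 1\<close> \<open>0 < tr\<close> \<open>0 < tk\<close> by simp
  have "D > 0"
    unfolding D_def using recovery \<open>0 < tk\<close> \<open>F p < 1\<close> by (simp add: field_simps)
  have "q * te < 1 * te"
    using \<open>q * te \<le> ts\<close> \<open>ts < te\<close> by linarith
  then have "q < 1"
    by (simp only: mult_less_cancel_right_pos[OF \<open>0 < te\<close>])
  then have "0 < s"
    unfolding s_def using \<open>0 < te\<close> \<open>D > 0\<close> \<open>0 < F p\<close> by (intro divide_pos_pos mult_pos_pos) auto
  have "s \<le> ts"
    using deadline unfolding s_def D_def by simp
  have spot_time: "(1 - q) * te = s * D * F p"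
    unfolding s_def using \<open>D > 0\<close> \<open>0 < F p\<close> by simp
  have moment_split: "I + J = integral {lo..hi} (\<lambda>x. x * f x)"
    unfolding I_def J_def using p
      Henstock_Kurzweil_Integration.integral_combine[OF _ _ moment_integrable_on_interval[OF f_nonneg f_int]]
    by simp
  have f_int_tail: "f integrable_on {p..hi}" and f_nonneg_tail: "\<And>x. x \<in> {p..hi} \<Longrightarrow> 0 \<le> f x"
    using integrable_subinterval_real[OF f_int] f_nonneg p by auto
  have "integral {p..hi} f = 1 - F p"
    using integral_split_density[OF f_int f_total p] F_def p by simp
  then have "J \<le> hi * (1 - F p)"
    unfolding J_def using moment_le_right_endpoint[OF f_nonneg_tail f_int_tail] by simp
  moreover have "I + J \<le> hi"
    using moment_split moment_le_right_endpoint[OF f_nonneg f_int] f_total by simp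
  ultimately have "(te - ts) * hi + ts * (I + J) < q * te * hi + s * I"
    using mixed_cost_exceeds_on_demand_max_bid[OF spot_time \<open>0 < s\<close> \<open>s \<le> ts\<close> \<open>D < 1\<close>
        \<open>0 < F p\<close>] \<open>0 \<le> lo\<close> \<open>lo < hi\<close> by simp
  moreover have "Phi3 F f lo hi tk te tr p q = q * te * hi + s * I"
    unfolding Phi3_def s_def I_def D_def by simp
  moreover have "F hi = 1"
    using F_def f_total \<open>lo < hi\<close> by simp
  ultimately show ?thesis
    using Phi3_max_bid[where F = F and hi = hi, OF _ \<open>0 < te\<close>] moment_split by simp
qed

lemma optimal_P3_imp_bid_accepted_surely:
  fixes F f :: "real \<Rightarrow> real" and lo hi tk te ts tr qs ps :: real
  assumes "0 \<le> lo" and "lo < hi"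
    and f_nonneg: "\<And>x. x \<in> {lo..hi} \<Longrightarrow> 0 \<le> f x"
    and f_int: "f integrable_on {lo..hi}"
    and f_total: "integral {lo..hi} f = 1"
    and F_def: "\<And>x. x \<in> {lo..hi} \<Longrightarrow> F x = integral {lo..x} f"
    and "0 < tk" and "0 < te" and "0 < ts" and "0 < tr"
    and "te / 2 < ts" and "ts < te"
    and "optimal_P3 F f lo hi tk te ts tr qs ps"
  shows "F ps = 1"
proof -
  have feas: "feasible_P3 F lo hi tk te ts tr qs ps"
    and opt: "\<And>q p. feasible_P3 F lo hi tk te ts tr q p \<Longrightarrow>
        Phi3 F f lo hi tk te tr ps qs \<le> Phi3 F f lo hi tk te tr p q"
    using \<open>optimal_P3 F f lo hi tk te ts tr qs ps\<close> unfolding optimal_P3_def by auto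
  then have ps: "ps \<in> {lo..hi}"
    unfolding feasible_P3_def by auto
  have "0 \<le> integral {ps..hi} f"
    using integrable_subinterval_real[OF f_int] f_nonneg ps by (intro integral_nonneg) auto
  then have "F ps \<le> 1"
    using integral_split_density[OF f_int f_total ps] F_def ps by simp
  moreover have "\<not> F ps < 1"
  proof
    assume "F ps < 1"
    have "F hi = 1"
      using F_def f_total \<open>lo < hi\<close> by simp
    then have "feasible_P3 F lo hi tk te ts tr (1 - ts / te) hi"
      using feasible_P3_on_demand_max_bid assms(2,7-9,11,12) by blast
    then show False
      using opt Phi3_on_demand_max_bid_less[OF assms(1-8,10,12) feas \<open>F ps < 1\<close>] by fastforce
  qed
  ultimately show ?thesis by linarith
qed

theorem claim2:
  fixes F f :: "real \<Rightarrow> real" and lo hi tk te ts tr qs ps :: real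
  assumes "0 \<le> lo" and "lo < hi"
    and "\<And>x. x \<in> {lo..hi} \<Longrightarrow> 0 \<le> f x"
    and "antimono_on {lo..hi} f"
    and "f integrable_on {lo..hi}"
    and "integral {lo..hi} f = 1"
    and "\<And>x. x \<in> {lo..hi} \<Longrightarrow> F x = integral {lo..x} f"
    and "0 < tk" and "0 < te" and "0 < ts" and "0 < tr"
    and "te / 2 < ts" and "ts < te"
    and "optimal_P3 F f lo hi tk te ts tr qs ps"
  shows "F ps \<ge> 1 / 2"
  using optimal_P3_imp_bid_accepted_surely[OF assms(1-3,5-14)] by simp

end
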